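(* Let $k\ge2$, $\beta>0$, $J,B\in\mathbb{R}$, $\theta=\tanh(\beta J)$, $f_\theta(h)=\operatorname{arctanh}(\theta\tanh h)$, and let $h\in\mathbb{R}$ be a solution of $h=k f_\theta(h+\beta B)$. For the translation-invariant boundary condition $h_x=h$ for all $x\in V$, the free energy $F(h)=-\lim_{n\to\infty}\frac{1}{\beta|V_n|}\ln Z_n(h)$ exists and $$F(h)=-\frac{1}{2\beta}\ln\big[4\cosh(h+\beta(B+J))\cosh(h+\beta(B-J))\big].$$
   Context: $\Gamma^k=(V,L)$ is the Cayley tree in which every vertex has $k+1$ neighbours; $x^0\in V$ is a fixed root, $d$ the graph distance, $V_n=\{x:d(x,x^0)\le n\}$, $W_n=\{x:d(x,x^0)=n\}$. For a boundary condition $h=\{h_x\in\mathbb{R}\}_{x\in V}$, $$Z_n(h)=\sum_{\sigma\in\{-1,1\}^{V_n}}\exp\Big\{\beta J\sum_{\langle x,y\rangle\subset V_n}\sigma(x)\sigma(y)+\beta B\sum_{x\in V_n}\sigma(x)+\sum_{x\in W_n}h_x\sigma(x)\Big\},$$ the first sum running over nearest-neighbour pairs with both endpoints in $V_n$. *)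

theory Defs
  imports Complex_Main "HOL-Library.FuncSet"
begin

text \<open>Cayley tree of order k: vertices are finite words; the root is the empty word,
  the root has k+1 children [i] (i < k+1), every other vertex xs has k children xs @ [i] (i < k).
  Then every vertex has exactly k+1 neighbours and the graph distance to the root is the length.\<close>

definition cayley_vertex :: "nat \<Rightarrow> nat list \<Rightarrow> bool" where
  "cayley_vertex k xs = (case xs of [] \<Rightarrow> True | i # ys \<Rightarrow> i < k + 1 \<and> (\<forall>j\<in>set ys. j < k))"

definition ball_V :: "nat \<Rightarrow> nat \<Rightarrow> nat list set" where
  "ball_V k n = {xs. cayley_vertex k xs \<and> length xs \<le> n}"

definition sphere_W :: "nat \<Rightarrow> nat \<Rightarrow> nat list set" where
  "sphere_W k n = {xs. cayley_vertex k xs \<and> length xs = n}"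

text \<open>Nearest-neighbour pairs with both endpoints in V_n, each unordered pair counted once
  as (parent, child).\<close>
definition edges_V :: "nat \<Rightarrow> nat \<Rightarrow> (nat list \<times> nat list) set" where
  "edges_V k n = {(x, x @ [i]) | x i. x @ [i] \<in> ball_V k n}"

definition partition_fn ::
  "nat \<Rightarrow> real \<Rightarrow> real \<Rightarrow> real \<Rightarrow> (nat list \<Rightarrow> real) \<Rightarrow> nat \<Rightarrow> real" where
  "partition_fn k \<beta> J B h n =
     (\<Sum>\<sigma>\<in>PiE (ball_V k n) (\<lambda>_. {-1, 1::real}).
        exp (\<beta> * J * (\<Sum>e\<in>edges_V k n. \<sigma> (fst e) * \<sigma> (snd e))
             + \<beta> * B * (\<Sum>x\<in>ball_V k n. \<sigma> x)
             + (\<Sum>x\<in>sphere_W k n. h x * \<sigma> x)))"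

definition f_theta :: "real \<Rightarrow> real \<Rightarrow> real" where
  "f_theta \<theta> x = artanh (\<theta> * tanh x)"

end

theory Submission
  imports Defs
begin

text \<open>Summing out the spins on the outermost sphere turns the field on each parent vertex into
  k f_theta (h + \<beta> B), at the price of the factor
  C = sqrt (4 cosh (h + \<beta> (B + J)) cosh (h + \<beta> (B - J))) per removed vertex. For a fixed point h
  this gives Z (n + 1) = C ^ |W (n + 1)| * Z n for n \<ge> 1, so ln Z n - |V n| ln C is eventually
  constant, and since |V n| grows without bound, ln Z n / |V n| tends to ln C.\<close>

lemma f_theta_tanh:
  fixes a u :: real
  shows "f_theta (tanh a) u = (ln (cosh (u + a)) - ln (cosh (u - a))) / 2"
proof -
  have "1 + tanh a * tanh u = cosh (u + a) / (cosh a * cosh u)"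
    "1 - tanh a * tanh u = cosh (u - a) / (cosh a * cosh u)"
    by (simp_all add: tanh_def cosh_add cosh_diff field_simps)
  then show ?thesis
    by (simp add: f_theta_def artanh_def ln_div)
qed

lemma two_cosh_shift_eq:
  fixes a u s :: real
  assumes "s \<in> {-1, 1}"
  shows "2 * cosh (u + a * s) = sqrt (4 * cosh (u + a) * cosh (u - a)) * exp (f_theta (tanh a) u * s)"
proof -
  define p q where "p = cosh (u + a)" and "q = cosh (u - a)"
  have "p > 0" "q > 0" by (simp_all add: p_def q_def)
  then have "(2 * exp ((ln p + ln q) / 2))\<^sup>2 = 4 * p * q"
    by (simp add: power2_eq_square flip: exp_add) (simp add: exp_add)
  then have sqrt_eq: "sqrt (4 * p * q) = 2 * exp ((ln p + ln q) / 2)"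
    by (intro real_sqrt_unique) simp_all
  show ?thesis
    using assms unfolding f_theta_tanh sqrt_eq p_def[symmetric] q_def[symmetric]
    by auto (simp_all add: p_def q_def field_simps flip: exp_add)
qed

lemma sum_spins_exp: "(\<Sum>t\<in>{-1, 1::real}. exp (c * t)) = 2 * cosh c"
  by (simp add: cosh_def exp_minus)

lemma cayley_vertex_snoc:
  "cayley_vertex k (xs @ [i]) \<longleftrightarrow> (if xs = [] then i < k + 1 else cayley_vertex k xs \<and> i < k)"
  by (cases xs) (auto simp: cayley_vertex_def)

lemma cayley_vertex_butlast: "cayley_vertex k xs \<Longrightarrow> cayley_vertex k (butlast xs)"
  by (cases xs rule: rev_cases) (auto simp: cayley_vertex_snoc cayley_vertex_def[of _ "[]"] split: if_splits)

lemma finite_ball_V: "finite (ball_V k n)"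
proof (rule finite_subset)
  show "ball_V k n \<subseteq> {xs. set xs \<subseteq> {..<k+1} \<and> length xs \<le> n}"
    by (auto simp: ball_V_def cayley_vertex_def less_Suc_eq split: list.split_asm)
qed (rule finite_lists_length_le, simp)

lemma sphere_W_subset_ball_V: "sphere_W k n \<subseteq> ball_V k n"
  by (auto simp: ball_V_def sphere_W_def)

lemma finite_sphere_W: "finite (sphere_W k n)"
  using finite_subset[OF sphere_W_subset_ball_V finite_ball_V] .

lemma ball_V_Suc: "ball_V k (Suc n) = ball_V k n \<union> sphere_W k (Suc n)"
  by (auto simp: ball_V_def sphere_W_def)

lemma ball_V_sphere_W_Suc_disjoint: "ball_V k n \<inter> sphere_W k (Suc n) = {}"
  by (auto simp: ball_V_def sphere_W_def)

lemma butlast_in_ball_V: "y \<in> ball_V k n \<Longrightarrow> butlast y \<in> ball_V k n"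
  by (auto simp: ball_V_def cayley_vertex_butlast)

lemma butlast_in_sphere_W: "y \<in> sphere_W k (Suc n) \<Longrightarrow> butlast y \<in> sphere_W k n"
  by (auto simp: sphere_W_def cayley_vertex_butlast)

lemma sum_edges_V:
  "(\<Sum>e\<in>edges_V k n. g (fst e) (snd e)) = (\<Sum>y\<in>ball_V k n - {[]}. g (butlast y) y)"
proof -
  have "edges_V k n = (\<lambda>y. (butlast y, y)) ` (ball_V k n - {[]})"
    by (auto simp: edges_V_def image_iff) (metis append_butlast_last_id)
  then show ?thesis
    by (simp add: sum.reindex inj_on_def)
qed

lemma sphere_W_Suc_eq_image:
  assumes "n \<ge> 1"
  shows "sphere_W k (Suc n) = (\<lambda>(x, i). x @ [i]) ` (sphere_W k n \<times> {..<k})"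
proof
  show "(\<lambda>(x, i). x @ [i]) ` (sphere_W k n \<times> {..<k}) \<subseteq> sphere_W k (Suc n)"
    using assms by (auto simp: sphere_W_def cayley_vertex_snoc)
next
  show "sphere_W k (Suc n) \<subseteq> (\<lambda>(x, i). x @ [i]) ` (sphere_W k n \<times> {..<k})"
  proof
    fix y assume y: "y \<in> sphere_W k (Suc n)"
    then obtain x i where "y = x @ [i]"
      by (cases y rule: rev_cases) (auto simp: sphere_W_def)
    with y assms show "y \<in> (\<lambda>(x, i). x @ [i]) ` (sphere_W k n \<times> {..<k})"
      by (auto simp: sphere_W_def cayley_vertex_snoc split: if_splits)
  qed
qed

lemma sum_sphere_W_Suc_butlast:
  assumes "n \<ge> 1"
  shows "(\<Sum>y\<in>sphere_W k (Suc n). g (butlast y)) = real k * (\<Sum>x\<in>sphere_W k n. g x)"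
proof -
  have "(\<Sum>y\<in>sphere_W k (Suc n). g (butlast y)) = (\<Sum>(x, i)\<in>sphere_W k n \<times> {..<k}. g x)"
    unfolding sphere_W_Suc_eq_image[OF assms] by (subst sum.reindex) (auto simp: inj_on_def intro!: sum.cong)
  also have "\<dots> = real k * (\<Sum>x\<in>sphere_W k n. g x)"
    by (simp add: sum.cartesian_product[symmetric] sum_distrib_left)
  finally show ?thesis .
qed

lemma card_ball_V_ge:
  assumes "k \<ge> 1"
  shows "n \<le> card (ball_V k n)"
proof -
  have "cayley_vertex k (replicate m 0)" for m
    using assms by (cases m) (auto simp: cayley_vertex_def)
  then have "(\<lambda>m. replicate m 0) ` {..<n} \<subseteq> ball_V k n"
    by (auto simp: ball_V_def)
  from card_mono[OF finite_ball_V this] show ?thesis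
    by (simp add: card_image inj_on_def)
qed

lemma sum_PiE_union_disjoint:
  assumes "A \<inter> B = {}"
  shows "(\<Sum>\<sigma>\<in>PiE (A \<union> B) S. F \<sigma>)
       = (\<Sum>\<sigma>\<in>PiE A S. \<Sum>\<tau>\<in>PiE B S. F (\<lambda>x. if x \<in> A then \<sigma> x else \<tau> x))"
proof -
  have "(\<Sum>\<sigma>\<in>PiE (A \<union> B) S. F \<sigma>)
      = (\<Sum>(\<sigma>, \<tau>)\<in>PiE A S \<times> PiE B S. F (\<lambda>x. if x \<in> A then \<sigma> x else \<tau> x))"
    by (rule sum.reindex_bij_witness[of _ "\<lambda>(\<sigma>, \<tau>) x. if x \<in> A then \<sigma> x else \<tau> x"
          "\<lambda>\<sigma>. (restrict \<sigma> A, restrict \<sigma> B)"])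
      (use assms in \<open>auto simp: PiE_def extensional_def fun_eq_iff intro!: arg_cong[where f = F]\<close>)
  then show ?thesis
    by (simp add: sum.cartesian_product)
qed

lemma tendsto_div_of_proportional_increments:
  fixes x N :: "nat \<Rightarrow> real"
  assumes "\<And>n. n \<ge> m \<Longrightarrow> x (Suc n) - x n = L * (N (Suc n) - N n)"
    and "filterlim N at_top sequentially"
  shows "(\<lambda>n. x n / N n) \<longlonglongrightarrow> L"
proof -
  define c where "c = x m - L * N m"
  have x_eq: "x n = c + L * N n" if "n \<ge> m" for n
    using that
  proof (induction n rule: dec_induct)
    case (step n)
    then show ?case using assms(1)[OF step(1)] by (simp add: algebra_simps)
  qed (simp add: c_def)
  have "eventually (\<lambda>n. L + c / N n = x n / N n) sequentially"
    using eventually_ge_at_top[of m] assms(2)[unfolded filterlim_at_top_dense, rule_format, of 0]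
    by eventually_elim (simp add: x_eq field_simps)
  moreover have "(\<lambda>n. L + c / N n) \<longlonglongrightarrow> L + 0"
    by (intro tendsto_intros tendsto_divide_0[OF tendsto_const]
        filterlim_at_top_imp_at_infinity[OF assms(2)])
  ultimately show ?thesis
    by (simp add: Lim_transform_eventually)
qed

definition ising_energy :: "nat \<Rightarrow> real \<Rightarrow> real \<Rightarrow> real \<Rightarrow> nat \<Rightarrow> (nat list \<Rightarrow> real) \<Rightarrow> real" where
  "ising_energy k a b h n \<sigma> =
     a * (\<Sum>y\<in>ball_V k n - {[]}. \<sigma> (butlast y) * \<sigma> y) + b * (\<Sum>x\<in>ball_V k n. \<sigma> x)
       + h * (\<Sum>x\<in>sphere_W k n. \<sigma> x)"

lemma partition_fn_const_eq:
  "partition_fn k \<beta> J B (\<lambda>_. h) n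
     = (\<Sum>\<sigma>\<in>PiE (ball_V k n) (\<lambda>_. {-1, 1}). exp (ising_energy k (\<beta> * J) (\<beta> * B) h n \<sigma>))"
proof -
  have "(\<Sum>e\<in>edges_V k n. \<sigma> (fst e) * \<sigma> (snd e)) = (\<Sum>y\<in>ball_V k n - {[]}. \<sigma> (butlast y) * \<sigma> y)"
    for \<sigma> :: "nat list \<Rightarrow> real"
    by (rule sum_edges_V)
  then show ?thesis
    by (simp add: partition_fn_def ising_energy_def sum_distrib_left mult.assoc)
qed

lemma ising_energy_Suc_glue:
  "ising_energy k a b h (Suc n) (\<lambda>x. if x \<in> ball_V k n then \<sigma> x else \<tau> x)
     = ising_energy k a b 0 n \<sigma> + (\<Sum>y\<in>sphere_W k (Suc n). (a * \<sigma> (butlast y) + b + h) * \<tau> y)"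
proof -
  let ?V = "ball_V k n" and ?W = "sphere_W k (Suc n)"
  let ?\<rho> = "\<lambda>x. if x \<in> ?V then \<sigma> x else \<tau> x"
  have W_out: "y \<notin> ?V" if "y \<in> ?W" for y
    using that ball_V_sphere_W_Suc_disjoint by blast
  have W_parent: "butlast y \<in> ?V" if "y \<in> ?W" for y
    using that butlast_in_sphere_W sphere_W_subset_ball_V by blast
  have "ball_V k (Suc n) - {[]} = (?V - {[]}) \<union> ?W"
    by (auto simp: ball_V_Suc sphere_W_def)
  then have "(\<Sum>y\<in>ball_V k (Suc n) - {[]}. ?\<rho> (butlast y) * ?\<rho> y)
      = (\<Sum>y\<in>?V - {[]}. ?\<rho> (butlast y) * ?\<rho> y) + (\<Sum>y\<in>?W. ?\<rho> (butlast y) * ?\<rho> y)"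
    using ball_V_sphere_W_Suc_disjoint
    by (simp add: sum.union_disjoint finite_ball_V finite_sphere_W Diff_Int_distrib2)
  also have "\<dots> = (\<Sum>y\<in>?V - {[]}. \<sigma> (butlast y) * \<sigma> y) + (\<Sum>y\<in>?W. \<sigma> (butlast y) * \<tau> y)"
    using W_out W_parent by (intro arg_cong2[where f = "(+)"] sum.cong) (auto simp: butlast_in_ball_V)
  finally have edges: "(\<Sum>y\<in>ball_V k (Suc n) - {[]}. ?\<rho> (butlast y) * ?\<rho> y)
      = (\<Sum>y\<in>?V - {[]}. \<sigma> (butlast y) * \<sigma> y) + (\<Sum>y\<in>?W. \<sigma> (butlast y) * \<tau> y)" .
  have vertices: "(\<Sum>x\<in>ball_V k (Suc n). ?\<rho> x) = (\<Sum>x\<in>?V. \<sigma> x) + (\<Sum>x\<in>?W. \<tau> x)"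
    using W_out ball_V_sphere_W_Suc_disjoint
    by (simp add: ball_V_Suc sum.union_disjoint finite_ball_V finite_sphere_W cong: sum.cong)
  have boundary: "(\<Sum>x\<in>?W. ?\<rho> x) = (\<Sum>x\<in>?W. \<tau> x)"
    using W_out by simp
  show ?thesis
    unfolding ising_energy_def edges vertices boundary
    by (simp add: sum.distrib sum_distrib_left algebra_simps)
qed

lemma partition_fn_Suc:
  assumes "n \<ge> 1"
  shows "partition_fn k \<beta> J B (\<lambda>_. h) (Suc n)
     = sqrt (4 * cosh (h + \<beta> * (B + J)) * cosh (h + \<beta> * (B - J))) ^ card (sphere_W k (Suc n))
       * partition_fn k \<beta> J B (\<lambda>_. real k * f_theta (tanh (\<beta> * J)) (h + \<beta> * B)) n"
proof -
  define a b u where "a = \<beta> * J" and "b = \<beta> * B" and "u = h + \<beta> * B"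
  define C where "C = sqrt (4 * cosh (u + a) * cosh (u - a))"
  define f where "f = f_theta (tanh a) u"
  let ?V = "ball_V k n" and ?W = "sphere_W k (Suc n)" and ?S = "\<lambda>_::nat list. {-1, 1::real}"
  have spin_sum: "(\<Sum>\<tau>\<in>PiE ?W ?S. exp (\<Sum>y\<in>?W. (a * \<sigma> (butlast y) + b + h) * \<tau> y))
      = C ^ card ?W * exp (real k * f * (\<Sum>x\<in>sphere_W k n. \<sigma> x))"
    if \<sigma>: "\<sigma> \<in> PiE ?V ?S" for \<sigma>
  proof -
    have "(\<Sum>\<tau>\<in>PiE ?W ?S. exp (\<Sum>y\<in>?W. (a * \<sigma> (butlast y) + b + h) * \<tau> y))
        = (\<Prod>y\<in>?W. \<Sum>t\<in>{-1, 1}. exp ((a * \<sigma> (butlast y) + b + h) * t))"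
      unfolding exp_sum[OF finite_sphere_W] by (rule prod_sum_PiE[symmetric]) (simp_all add: finite_sphere_W)
    also have "\<dots> = (\<Prod>y\<in>?W. C * exp (f * \<sigma> (butlast y)))"
    proof (rule prod.cong)
      fix y assume "y \<in> ?W"
      then have "\<sigma> (butlast y) \<in> {-1, 1}"
        using \<sigma> butlast_in_sphere_W sphere_W_subset_ball_V by blast
      from two_cosh_shift_eq[OF this, of u a] show "(\<Sum>t\<in>{-1, 1}. exp ((a * \<sigma> (butlast y) + b + h) * t))
          = C * exp (f * \<sigma> (butlast y))"
        unfolding sum_spins_exp by (simp add: C_def f_def u_def b_def algebra_simps)
    qed simp
    also have "\<dots> = C ^ card ?W * exp (\<Sum>y\<in>?W. f * \<sigma> (butlast y))"
      unfolding exp_sum[OF finite_sphere_W] prod.distrib by simp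
    also have "(\<Sum>y\<in>?W. f * \<sigma> (butlast y)) = real k * f * (\<Sum>x\<in>sphere_W k n. \<sigma> x)"
      by (simp add: sum_distrib_left[symmetric] sum_sphere_W_Suc_butlast[OF assms])
    finally show ?thesis .
  qed
  have "partition_fn k \<beta> J B (\<lambda>_. h) (Suc n)
      = (\<Sum>\<sigma>\<in>PiE ?V ?S. \<Sum>\<tau>\<in>PiE ?W ?S.
           exp (ising_energy k a b 0 n \<sigma>) * exp (\<Sum>y\<in>?W. (a * \<sigma> (butlast y) + b + h) * \<tau> y))"
    by (simp add: partition_fn_const_eq ball_V_Suc sum_PiE_union_disjoint[OF ball_V_sphere_W_Suc_disjoint]
        ising_energy_Suc_glue exp_add a_def b_def)
  also have "\<dots> = (\<Sum>\<sigma>\<in>PiE ?V ?S.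
      exp (ising_energy k a b 0 n \<sigma>) * (C ^ card ?W * exp (real k * f * (\<Sum>x\<in>sphere_W k n. \<sigma> x))))"
    by (intro sum.cong refl) (simp add: sum_distrib_left[symmetric] spin_sum)
  also have "\<dots> = C ^ card ?W * (\<Sum>\<sigma>\<in>PiE ?V ?S. exp (ising_energy k a b (real k * f) n \<sigma>))"
    by (simp add: sum_distrib_left ising_energy_def exp_add mult_ac)
  finally show ?thesis
    by (simp add: partition_fn_const_eq C_def f_def a_def b_def u_def algebra_simps)
qed

lemma partition_fn_pos: "partition_fn k \<beta> J B h n > 0"
  unfolding partition_fn_def
  by (rule sum_pos) (auto simp: finite_PiE finite_ball_V PiE_eq_empty_iff)

theorem proposition2:
  fixes k :: nat and \<beta> J B h :: real
  assumes "k \<ge> 2" and "\<beta> > 0"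
    and "h = real k * f_theta (tanh (\<beta> * J)) (h + \<beta> * B)"
  shows "(\<lambda>n. - (1 / (\<beta> * real (card (ball_V k n)))) * ln (partition_fn k \<beta> J B (\<lambda>_. h) n))
           \<longlonglongrightarrow> - (1 / (2 * \<beta>)) * ln (4 * cosh (h + \<beta> * (B + J)) * cosh (h + \<beta> * (B - J)))"
proof -
  define P where "P = 4 * cosh (h + \<beta> * (B + J)) * cosh (h + \<beta> * (B - J))"
  define Z where "Z = partition_fn k \<beta> J B (\<lambda>_. h)"
  define N where "N = (\<lambda>n. real (card (ball_V k n)))"
  have "P > 0" by (simp add: P_def)
  have increment: "ln (Z (Suc n)) - ln (Z n) = ln (sqrt P) * (N (Suc n) - N n)" if "n \<ge> 1" for n
  proof -
    have "Z (Suc n) = sqrt P ^ card (sphere_W k (Suc n)) * Z n"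
      using partition_fn_Suc[OF that, of k \<beta> J B h] assms(3) by (simp add: Z_def P_def)
    moreover have "N (Suc n) - N n = card (sphere_W k (Suc n))"
      by (simp add: N_def ball_V_Suc card_Un_disjoint finite_ball_V finite_sphere_W
          ball_V_sphere_W_Suc_disjoint)
    moreover have "Z n > 0"
      unfolding Z_def by (rule partition_fn_pos)
    ultimately show ?thesis
      using \<open>P > 0\<close> by (simp add: ln_mult ln_realpow)
  qed
  have "filterlim N at_top sequentially"
    using assms(1) card_ball_V_ge
    by (intro filterlim_at_top_mono[OF filterlim_real_sequentially]) (auto simp: N_def)
  then have "(\<lambda>n. ln (Z n) / N n) \<longlonglongrightarrow> ln (sqrt P)"
    using increment by (rule tendsto_div_of_proportional_increments[rotated])
  then have "(\<lambda>n. - (1 / \<beta>) * (ln (Z n) / N n)) \<longlonglongrightarrow> - (1 / \<beta>) * (ln P / 2)"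
    using \<open>P > 0\<close> by (intro tendsto_mult_left) (simp add: ln_sqrt)
  then show ?thesis
    by (simp add: Z_def N_def P_def mult.commute)
qed

end
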